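(* Let $K$ be a $d_1$-standard knot. Then the HOMFLY-PT $S$-invariant $S(K)$, and the rank of $d_1$ in each trigrading, are completely determined by the trigraded vector space $\mathcal{H}(K)$ (i.e. by the dimensions $\dim\mathcal{H}^{q,a,t}(K)$).
   Context: For a knot $K$, $\mathcal{H}(K)$ is reduced triply graded (HOMFLY-PT) Khovanov–Rozansky homology over $\mathbb{Q}$, a finite-dimensional space graded by even gradings $(q,a,t)$; $\Delta=q+a+t$. By Rasmussen, there is a spectral sequence with first page $\mathcal{H}(K)$ whose $i$-th differential $d_1^{(i)}$ changes degrees by $(q,a,t)\mapsto(q+2i,a-2i,t+2-2i)$, converging to a one-dimensional space supported in tridegree $(q,a,t)=(S,-S,-S)$ (hence in $\Delta$-grading $-S$); this integer $S=S(K)$ is the HOMFLY-PT $S$-invariant. Write $d_1=d_1^{(1)}$. $K$ is $d_1$-standard if $d_1^{(i)}=0$ for all $i\ge 2$. *)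

theory Defs
  imports "Jordan_Normal_Form.DL_Rank"
begin

text \<open>Abstract model of Rasmussen's spectral sequence on reduced HOMFLY-PT homology.  A trigraded finite-dimensional
  rational vector space is represented (up to isomorphism) by its dimension function;
  a graded component of dimension n is the space of rational column vectors of length n,
  and linear maps between components are rational matrices.\<close>

type_synonym tdeg = "int \<times> int \<times> int"

definition mrank :: "rat mat \<Rightarrow> nat" where
  "mrank (A :: rat mat) = vec_space.rank (dim_row A) A"

fun shift :: "nat \<Rightarrow> tdeg \<Rightarrow> tdeg" where
  "shift i (q, a, t) = (q + 2 * int i, a - 2 * int i, t + 2 - 2 * int i)"

fun unshift :: "nat \<Rightarrow> tdeg \<Rightarrow> tdeg" where
  "unshift i (q, a, t) = (q - 2 * int i, a + 2 * int i, t - 2 + 2 * int i)"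

text \<open>E i g : dimension of the page E_i in tridegree g (pages indexed from 1; E_1 = H(K)).
  D i g : the differential d^(i) on page E_i leaving tridegree g, a matrix
  from E_i^g to E_i^(shift i g).\<close>
definition rasmussen_ss :: "(nat \<Rightarrow> tdeg \<Rightarrow> nat) \<Rightarrow> (nat \<Rightarrow> tdeg \<Rightarrow> rat mat) \<Rightarrow> int \<Rightarrow> bool" where
  "rasmussen_ss E D S \<longleftrightarrow>
     finite {g. E 1 g \<noteq> 0} \<and>
     (\<forall>q a t. E 1 (q, a, t) \<noteq> 0 \<longrightarrow> even q \<and> even a \<and> even t) \<and>
     (\<forall>i\<ge>1. \<forall>g. D i g \<in> carrier_mat (E i (shift i g)) (E i g)) \<and>
     (\<forall>i\<ge>1. \<forall>g. D i (shift i g) * D i g = 0\<^sub>m (E i (shift i (shift i g))) (E i g)) \<and>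
     (\<forall>i\<ge>1. \<forall>g. E (Suc i) g + mrank (D i g) + mrank (D i (unshift i g)) = E i g) \<and>
     (\<exists>N\<ge>1. \<forall>r\<ge>N. \<forall>g. E r g = (if g = (S, -S, -S) then 1 else 0))"

definition d1_standard :: "(nat \<Rightarrow> tdeg \<Rightarrow> rat mat) \<Rightarrow> bool" where
  "d1_standard D \<longleftrightarrow> (\<forall>i\<ge>2. \<forall>g. D i g = 0\<^sub>m (dim_row (D i g)) (dim_col (D i g)))"

end

theory Submission
  imports Defs
begin

text \<open>For a \<open>d\<^sub>1\<close>-standard knot the page \<open>E\<^sub>2\<close> is already the one-dimensional limit,
  so \<open>dim \<H>\<^sup>g = \<delta>\<^sub>S(g) + r(g) + r(g - v)\<close>, where \<open>r(g)\<close> is the rank of \<open>d\<^sub>1\<close> leaving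
  \<open>g\<close> and \<open>v = (2,-2,0)\<close> is its degree. Given two such spectral sequences with the same
  \<open>E\<^sub>1\<close>, the difference \<open>x\<close> of their rank functions is finitely supported and satisfies
  \<open>x(g) + x(g - v) = \<delta>\<^sub>S\<^sub>'(g) - \<delta>\<^sub>S(g)\<close>. On a line \<open>g + \<int>v\<close> a finitely supported
  solution of \<open>y(k) + y(k - 1) = 0\<close>, required for all \<open>k\<close> but one, vanishes identically.
  Since the \<open>t\<close>-degree is constant along such lines, \<open>(S',-S',-S')\<close> does not lie on the
  line through \<open>(S,-S,-S)\<close> unless \<open>S = S'\<close>; hence \<open>S = S'\<close>, and then \<open>x = 0\<close>.\<close>

lemma finite_support_recurrence_vanishes:
  fixes y :: "int \<Rightarrow> 'a::group_add"
  assumes fin: "finite {k. y k \<noteq> 0}"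
    and rec: "\<And>k. k \<noteq> k0 \<Longrightarrow> y k + y (k - 1) = 0"
  shows "y k = 0"
proof -
  obtain L where L: "\<And>k. k \<le> L \<Longrightarrow> y k = 0"
    using bdd_below_finite[OF fin] unfolding bdd_below_def
    by (metis (mono_tags) mem_Collect_eq zle_diff1_eq not_le)
  obtain U where U: "\<And>k. U \<le> k \<Longrightarrow> y k = 0"
    using bdd_above_finite[OF fin] unfolding bdd_above_def
    by (metis (mono_tags) mem_Collect_eq zle_add1_eq_le not_le)
  have below: "k < k0 \<longrightarrow> y k = 0" if "L \<le> k" for k
    using that
  proof (induction k rule: int_ge_induct)
    case base
    then show ?case by (simp add: L)
  next
    case (step i)
    then show ?case using rec[of "i + 1"] by auto
  qed
  have above: "k0 \<le> k \<longrightarrow> y k = 0" if "k \<le> U" for k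
    using that
  proof (induction k rule: int_le_induct)
    case base
    then show ?case by (simp add: U)
  next
    case (step i)
    then show ?case using rec[of i] by auto
  qed
  show ?thesis
  proof (cases "k \<le> L \<or> U \<le> k")
    case True
    then show ?thesis using L U by blast
  next
    case False
    then have "L \<le> k" "k \<le> U" by auto
    then show ?thesis using below above by (cases "k < k0") auto
  qed
qed

fun d1_line :: "tdeg \<Rightarrow> int \<Rightarrow> tdeg" where
  "d1_line (q, a, t) k = (q + 2 * k, a - 2 * k, t)"

lemma d1_line_0 [simp]: "d1_line g 0 = g"
  by (cases g) simp

lemma unshift_d1_line [simp]: "unshift 1 (d1_line g k) = d1_line g (k - 1)"
  by (cases g) (simp add: algebra_simps)

lemma inj_d1_line: "inj (d1_line g)"
  by (cases g) (auto intro: injI)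

lemma finite_support_along_d1_line:
  assumes "finite {h. x h \<noteq> 0}"
  shows "finite {k. x (d1_line g k) \<noteq> 0}"
  using finite_vimageI[OF assms inj_d1_line] by (simp add: vimage_def)

lemma d1_line_recurrence_vanishes:
  fixes x :: "tdeg \<Rightarrow> 'a::group_add"
  assumes "finite {h. x h \<noteq> 0}"
    and "\<And>k. k \<noteq> k0 \<Longrightarrow> x (d1_line g k) + x (d1_line g (k - 1)) = 0"
  shows "x (d1_line g k) = 0"
  using finite_support_along_d1_line[OF assms(1)] assms(2)
  by (rule finite_support_recurrence_vanishes)

lemma finite_d1_solution_peaks_coincide:
  fixes x :: "tdeg \<Rightarrow> int"
  assumes fin: "finite {g. x g \<noteq> 0}"
    and rec: "\<And>g. x g + x (unshift 1 g)
      = (if g = (S', -S', -S') then 1 else 0) - (if g = (S, -S, -S) then 1 else 0)"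
  shows "S = S'"
proof (rule ccontr)
  assume "S \<noteq> S'"
  define g0 where "g0 = (S, -S, -S)"
  have "x (d1_line g0 k) + x (d1_line g0 (k - 1)) = 0" if "k \<noteq> 0" for k
    using rec[of "d1_line g0 k"] that \<open>S \<noteq> S'\<close> by (simp add: g0_def algebra_simps)
  then have "x (d1_line g0 k) = 0" for k
    by (rule d1_line_recurrence_vanishes[OF fin])
  from this[of 0] this[of "-1"] have "x g0 + x (unshift 1 g0) = 0"
    using unshift_d1_line[of g0 0] by simp
  then show False
    using rec[of g0] \<open>S \<noteq> S'\<close> by (simp add: g0_def)
qed

lemma mrank_zero_mat [simp]: "mrank (0\<^sub>m n m) = 0"
  unfolding mrank_def index_zero_mat(2) by (rule vec_space.rank_0I)

lemma mrank_le_dim_col: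
  assumes "A \<in> carrier_mat n m"
  shows "mrank A \<le> m"
proof -
  have "A \<in> carrier_mat (dim_row A) m"
    using assms by auto
  then show ?thesis
    unfolding mrank_def by (rule vec_space.rank_le_nc)
qed

lemma rasmussen_ss_page_step:
  assumes "rasmussen_ss E D S" and "i \<ge> 1"
  shows "E (Suc i) g + mrank (D i g) + mrank (D i (unshift i g)) = E i g"
  using assms unfolding rasmussen_ss_def by blast

lemma rasmussen_ss_finite_d1_rank_support:
  assumes "rasmussen_ss E D S"
  shows "finite {g. mrank (D 1 g) \<noteq> 0}"
proof (rule finite_subset)
  have "mrank (D 1 g) \<le> E 1 g" for g
    using assms unfolding rasmussen_ss_def by (blast intro: mrank_le_dim_col)
  then show "{g. mrank (D 1 g) \<noteq> 0} \<subseteq> {g. E 1 g \<noteq> 0}"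
    by (metis (mono_tags) Collect_mono le_zero_eq)
  show "finite {g. E 1 g \<noteq> 0}"
    using assms unfolding rasmussen_ss_def by blast
qed

lemma d1_standard_E2:
  assumes "rasmussen_ss E D S" and "d1_standard D"
  shows "E 2 g = (if g = (S, -S, -S) then 1 else 0)"
proof -
  have "mrank (D i h) = 0" if "i \<ge> 2" for i h
    using assms(2) that unfolding d1_standard_def by (metis mrank_zero_mat)
  then have next_page: "E (Suc i) g = E i g" if "i \<ge> 2" for i
    using rasmussen_ss_page_step[OF assms(1), of i g] that by simp
  have stable: "E i g = E 2 g" if "i \<ge> 2" for i
    using that
  proof (induction i rule: dec_induct)
    case (step i)
    then show ?case using next_page by simp
  qed simp
  obtain N where "\<forall>r\<ge>N. \<forall>g. E r g = (if g = (S, -S, -S) then 1 else 0)"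
    using assms(1) unfolding rasmussen_ss_def by blast
  then have "E (max N 2) g = (if g = (S, -S, -S) then 1 else 0)"
    by (meson max.cobounded1)
  then show ?thesis
    using stable[of "max N 2"] by simp
qed

lemma d1_standard_E1:
  assumes "rasmussen_ss E D S" and "d1_standard D"
  shows "E 1 g = (if g = (S, -S, -S) then 1 else 0) + mrank (D 1 g) + mrank (D 1 (unshift 1 g))"
  using rasmussen_ss_page_step[OF assms(1), of 1 g] d1_standard_E2[OF assms, of g]
  by (simp add: numeral_2_eq_2)

theorem lemma2p17:
  fixes E E' :: "nat \<Rightarrow> tdeg \<Rightarrow> nat"
    and D D' :: "nat \<Rightarrow> tdeg \<Rightarrow> rat mat"
    and S S' :: int
  assumes "rasmussen_ss E D S" and "d1_standard D"
    and "rasmussen_ss E' D' S'" and "d1_standard D'"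
    and "E 1 = E' 1"
  shows "S = S' \<and> (\<forall>g. mrank (D 1 g) = mrank (D' 1 g))"
proof -
  define x where "x g = int (mrank (D 1 g)) - int (mrank (D' 1 g))" for g
  have fin: "finite {g. x g \<noteq> 0}"
    using rasmussen_ss_finite_d1_rank_support[OF assms(1)]
      rasmussen_ss_finite_d1_rank_support[OF assms(3)]
    by (rule finite_subset[rotated, OF finite_UnI]) (auto simp: x_def)
  have rec: "x g + x (unshift 1 g)
      = (if g = (S', -S', -S') then 1 else 0) - (if g = (S, -S, -S) then 1 else 0)" for g
  proof -
    have "E 1 g = E' 1 g"
      using assms(5) by simp
    then show ?thesis
      unfolding x_def d1_standard_E1[OF assms(1,2), of g] d1_standard_E1[OF assms(3,4), of g]
      by (simp split: if_splits)
  qed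
  have "S = S'"
    using fin rec by (rule finite_d1_solution_peaks_coincide)
  moreover have "x g = 0" for g
  proof -
    have "x (d1_line g k) + x (d1_line g (k - 1)) = 0" for k
      using rec[of "d1_line g k", unfolded unshift_d1_line] \<open>S = S'\<close> by simp
    then show ?thesis
      using d1_line_recurrence_vanishes[OF fin, of 0 g 0] by simp
  qed
  ultimately show ?thesis
    unfolding x_def by simp
qed

end
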